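(* Let $S$ be a semigroup and let $A$ be a skeleton of $S$. Then the subsemigroup $\langle A\rangle$ generated by $A$ is a regular subsemigroup of $S$.
   Context: For a nonempty set $X$ and a symbol $1\notin X$: elements of height $\ge 2$ are triples $g=(g^l,g^c,g^r)$; $\Gamma_0(X)=\{1\}$, $\Gamma_1(X)=X$, each $x\in X$ identified with $(1,x,1)$; for $i\ge 2$, $\Gamma_i(X)$ is the set of triples $g\in\Gamma_{i-1}(X)\times\Gamma_{i-2}(X)\times\Gamma_{i-1}(X)$ with $g^l\neq g^r$ and $g^c\in\{(g^l)^l,(g^l)^r\}\cap\{(g^r)^l,(g^r)^r\}$; $\Gamma(X)=\bigcup_{i\ge0}\Gamma_i(X)$. $S^1$ is $S$ with an identity adjoined if necessary; $E(\cdot)$ is the set of idempotents. For idempotents $e,f$ of a semigroup $R$, $S(e,f)=\{h\in E(R): fh=h=he,\ ehf=ef\}$. A skeleton mapping is a mapping $\phi:\Gamma(X)\to E(S^1)$ such that (i) $\phi|_X$ is one-to-one with $X\phi\subseteq E(S)$; (ii) $(1\phi)(g\phi)=g\phi=(g\phi)(1\phi)$ for all $g\in X$; (iii) $g\phi\in S\big((g^r\phi)(g^c\phi),(g^c\phi)(g^l\phi)\big)$ (in $S^1$) for all $g\in\Gamma_i(X)$, $i\ge2$. A skeleton of $S$ is a set of the form $(\Gamma(X)\setminus\{1\})\phi$ for some nonempty set $X$ and some skeleton mapping $\phi:\Gamma(X)\to E(S^1)$. *)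

theory Defs
  imports Main
begin

text \<open>Elements of Gamma(X): the symbol 1 (One), the elements of X (Leaf x, identified
  with the triple (1,x,1)), and triples (Tri l c r) of height at least 2.\<close>

datatype 'x gam = One | Leaf 'x | Tri "'x gam" "'x gam" "'x gam"

fun gl :: "'x gam \<Rightarrow> 'x gam" where
  "gl One = One"
| "gl (Leaf x) = One"
| "gl (Tri l c r) = l"

fun gr :: "'x gam \<Rightarrow> 'x gam" where
  "gr One = One"
| "gr (Leaf x) = One"
| "gr (Tri l c r) = r"

fun gc :: "'x gam \<Rightarrow> 'x gam" where
  "gc One = One"
| "gc (Leaf x) = Leaf x"
| "gc (Tri l c r) = c"

fun Gam :: "'x set \<Rightarrow> nat \<Rightarrow> 'x gam set" where
  "Gam X 0 = {One}"
| "Gam X (Suc 0) = Leaf ` X"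
| "Gam X (Suc (Suc i)) =
     {Tri l c r | l c r. l \<in> Gam X (Suc i) \<and> c \<in> Gam X i \<and> r \<in> Gam X (Suc i)
        \<and> l \<noteq> r \<and> c \<in> {gl l, gr l} \<inter> {gl r, gr r}}"

definition Gamma :: "'x set \<Rightarrow> 'x gam set" where
  "Gamma X = (\<Union>i. Gam X i)"

text \<open>The semigroup S is the whole type 'a. S^1 is modelled inside 'a option:
  Some a represents a in S, None is the adjoined identity, which belongs to S^1
  only if S has no identity.\<close>

definition has_identity :: "'a::semigroup_mult itself \<Rightarrow> bool" where
  "has_identity _ \<longleftrightarrow> (\<exists>e::'a. \<forall>x. e * x = x \<and> x * e = x)"

definition S1 :: "'a::semigroup_mult option set" where
  "S1 = (if has_identity TYPE('a) then Some ` UNIV else UNIV)"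

fun omul :: "'a::semigroup_mult option \<Rightarrow> 'a option \<Rightarrow> 'a option" where
  "omul None y = y"
| "omul (Some a) None = Some a"
| "omul (Some a) (Some b) = Some (a * b)"

definition E1 :: "'a::semigroup_mult option set" where
  "E1 = {u \<in> S1. omul u u = u}"

definition ES :: "'a::semigroup_mult set" where
  "ES = {a. a * a = a}"

definition sandwich :: "'a::semigroup_mult option \<Rightarrow> 'a option \<Rightarrow> 'a option set" where
  "sandwich e f = {h \<in> E1. omul f h = h \<and> omul h e = h
                      \<and> omul (omul e h) f = omul e f}"

definition skeleton_mapping :: "'x set \<Rightarrow> ('x gam \<Rightarrow> 'a::semigroup_mult option) \<Rightarrow> bool" where
  "skeleton_mapping X \<phi> \<longleftrightarrow>
     (\<forall>g \<in> Gamma X. \<phi> g \<in> E1)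
   \<and> inj_on \<phi> (Leaf ` X) \<and> \<phi> ` (Leaf ` X) \<subseteq> Some ` ES
   \<and> (\<forall>x \<in> X. omul (\<phi> One) (\<phi> (Leaf x)) = \<phi> (Leaf x) \<and> omul (\<phi> (Leaf x)) (\<phi> One) = \<phi> (Leaf x))
   \<and> (\<forall>i\<ge>2. \<forall>g \<in> Gam X i.
        \<phi> g \<in> sandwich (omul (\<phi> (gr g)) (\<phi> (gc g))) (omul (\<phi> (gc g)) (\<phi> (gl g))))"

inductive_set generated :: "'a::semigroup_mult set \<Rightarrow> 'a set" for A where
  gen_base: "a \<in> A \<Longrightarrow> a \<in> generated A"
| gen_mult: "a \<in> generated A \<Longrightarrow> b \<in> generated A \<Longrightarrow> a * b \<in> generated A"

definition regular_subsemigroup :: "'a::semigroup_mult set \<Rightarrow> bool" where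
  "regular_subsemigroup T \<longleftrightarrow>
     (\<forall>a\<in>T. \<forall>b\<in>T. a * b \<in> T) \<and> (\<forall>a\<in>T. \<exists>x\<in>T. a * x * a = a)"

end

(*
  Write \<psi> g for the value of the skeleton mapping at g \<noteq> 1 (it is never the adjoined
  identity) and T for the subsemigroup generated by these values. Call \<psi> g_n \<cdots> \<psi> g_1 a
  chain product if every g_i is one of the components (g_(i+1))^l, (g_(i+1))^r.
  The sandwich conditions give \<psi> h \<psi> g \<psi> h = \<psi> h for every component g of h, so chain
  products are regular in T. They also show that for a chain product p and any g the
  product p \<psi> g is L-related in T to a chain product ending in g: one climbs from the end
  of the chain through triples (l, c, h) of \<Gamma>(X), and to reach a new element x of X one
  first descends to some y in X and then passes through (x, 1, y). Hence every element of
  T is L-related in T to a regular element of T, and is therefore regular itself.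
*)

theory Submission
  imports Defs
begin

fun height :: "'x gam \<Rightarrow> nat" where
  "height One = 0"
| "height (Leaf x) = 1"
| "height (Tri l c r) = Suc (height l)"

fun components :: "'x gam \<Rightarrow> 'x gam set" where
  "components One = {}"
| "components (Leaf x) = {}"
| "components (Tri l c r) = {l, r}"

lemma Gam_height: "g \<in> Gam X i \<Longrightarrow> height g = i"
  by (induction X i arbitrary: g rule: Gam.induct) auto

lemma mem_Gamma_iff: "g \<in> Gamma X \<longleftrightarrow> g \<in> Gam X (height g)"
  unfolding Gamma_def using Gam_height by blast

lemma mem_Gam_iff: "g \<in> Gam X i \<longleftrightarrow> g \<in> Gamma X \<and> height g = i"
  using Gam_height mem_Gamma_iff by metis

lemma One_in_Gamma: "One \<in> Gamma X"
  by (simp add: mem_Gamma_iff)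

lemma Leaf_in_Gamma_iff: "Leaf x \<in> Gamma X \<longleftrightarrow> x \<in> X"
  by (auto simp: mem_Gamma_iff)

lemma Tri_in_Gamma_iff:
  "Tri l c r \<in> Gamma X \<longleftrightarrow>
     l \<in> Gamma X \<and> c \<in> Gamma X \<and> r \<in> Gamma X \<and> height l = Suc (height c) \<and>
     height r = Suc (height c) \<and> l \<noteq> r \<and> c \<in> {gl l, gr l} \<inter> {gl r, gr r}"
  by (cases "height l") (auto simp: mem_Gamma_iff[of "Tri l c r"] mem_Gam_iff)

lemma components_Gamma: "h \<in> Gamma X \<Longrightarrow> c \<in> components h \<Longrightarrow> c \<in> Gamma X - {One}"
  by (cases h) (auto simp: Tri_in_Gamma_iff)

lemma Tri_center_components:
  "Tri l c r \<in> Gamma X \<Longrightarrow> c \<noteq> One \<Longrightarrow> c \<in> components l \<inter> components r"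
  by (cases l; cases r) (auto simp: Tri_in_Gamma_iff)

lemma Tri_One_in_GammaE:
  assumes "Tri l One r \<in> Gamma X"
  obtains x y where "l = Leaf x" "r = Leaf y" "x \<in> X" "y \<in> X"
proof -
  have "l \<in> Gam X 1" "r \<in> Gam X 1"
    using assms by (auto simp: Tri_in_Gamma_iff mem_Gamma_iff[of l] mem_Gamma_iff[of r])
  then show thesis using that by auto
qed

lemma Tri_in_GammaI:
  assumes "l \<in> Gamma X" "r \<in> Gamma X" "c \<in> components l" "c \<in> components r" "l \<noteq> r"
  shows "Tri l c r \<in> Gamma X"
  using assms by (cases l; cases r) (auto simp: Tri_in_Gamma_iff)

lemma Tri_Leaf_in_Gamma: "x \<in> X \<Longrightarrow> y \<in> X \<Longrightarrow> x \<noteq> y \<Longrightarrow> Tri (Leaf x) One (Leaf y) \<in> Gamma X"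
  by (simp add: Tri_in_Gamma_iff Leaf_in_Gamma_iff One_in_Gamma)

lemma omul_eq_None_iff: "omul a b = None \<longleftrightarrow> a = None \<and> b = None"
  by (cases a; cases b) auto

lemma Some_in_sandwich_iff:
  "Some h \<in> sandwich (Some e) (Some f) \<longleftrightarrow> h * h = h \<and> f * h = h \<and> h * e = h \<and> e * h * f = e * f"
  by (auto simp: sandwich_def E1_def S1_def)

text \<open>Green's preorder \<open>\<le>\<^sub>L\<close> of a subsemigroup T, taken on all of S: \<open>a \<in> T\<^sup>1 b\<close>.\<close>

definition L_le :: "'a::semigroup_mult set \<Rightarrow> 'a \<Rightarrow> 'a \<Rightarrow> bool" where
  "L_le T a b \<longleftrightarrow> a = b \<or> (\<exists>s\<in>T. a = s * b)"

definition L_equiv :: "'a::semigroup_mult set \<Rightarrow> 'a \<Rightarrow> 'a \<Rightarrow> bool" where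
  "L_equiv T a b \<longleftrightarrow> L_le T a b \<and> L_le T b a"

lemma L_equiv_refl: "L_equiv T a a"
  by (simp add: L_equiv_def L_le_def)

lemma L_equivI: "s \<in> T \<Longrightarrow> t \<in> T \<Longrightarrow> a = s * b \<Longrightarrow> b = t * a \<Longrightarrow> L_equiv T a b"
  unfolding L_equiv_def L_le_def by blast

lemma L_le_trans:
  assumes "L_le (generated A) a b" "L_le (generated A) b c"
  shows "L_le (generated A) a c"
proof -
  have "\<exists>r\<in>generated A. a = r * c"
    if "s \<in> generated A" "t \<in> generated A" "a = s * b" "b = t * c" for s t
    using that generated.gen_mult by (metis mult.assoc)
  then show ?thesis
    using assms unfolding L_le_def by blast
qed

lemma L_equiv_trans [trans]:
  "L_equiv (generated A) a b \<Longrightarrow> L_equiv (generated A) b c \<Longrightarrow> L_equiv (generated A) a c"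
  unfolding L_equiv_def using L_le_trans by blast

lemma L_le_mult_right: "L_le T a b \<Longrightarrow> L_le T (a * z) (b * z)"
  unfolding L_le_def by (metis mult.assoc)

lemma L_equiv_mult_right: "L_equiv T a b \<Longrightarrow> L_equiv T (a * z) (b * z)"
  unfolding L_equiv_def using L_le_mult_right by blast

lemma regular_if_L_equiv:
  assumes "L_equiv (generated A) u p" "x \<in> generated A" "p * x * p = p"
  shows "\<exists>y\<in>generated A. u * y * u = u"
proof (cases "u = p")
  case True
  then show ?thesis using assms(2,3) by blast
next
  case False
  then obtain s t where st: "s \<in> generated A" "t \<in> generated A" "u = s * p" "p = t * u"
    using assms(1) unfolding L_equiv_def L_le_def by auto
  have "u * (x * t) * u = s * (p * x * (t * u))"
    using st(3) by (simp add: mult.assoc)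
  also have "\<dots> = u"
    using st(3,4) assms(3) by simp
  finally show ?thesis
    using st(2) assms(2) generated.gen_mult by blast
qed

locale skeleton =
  fixes X :: "'x set" and \<phi> :: "'x gam \<Rightarrow> 'a::semigroup_mult option"
  assumes skeleton_mapping: "skeleton_mapping X \<phi>"
begin

lemma phi_in_E1: "g \<in> Gamma X \<Longrightarrow> \<phi> g \<in> E1"
  using skeleton_mapping unfolding skeleton_mapping_def by blast

lemma phi_Leaf: "x \<in> X \<Longrightarrow> \<phi> (Leaf x) \<in> Some ` ES"
  using skeleton_mapping unfolding skeleton_mapping_def by blast

lemma phi_One_Leaf:
  "x \<in> X \<Longrightarrow> omul (\<phi> One) (\<phi> (Leaf x)) = \<phi> (Leaf x) \<and> omul (\<phi> (Leaf x)) (\<phi> One) = \<phi> (Leaf x)"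
  using skeleton_mapping unfolding skeleton_mapping_def by blast

lemma phi_Tri_sandwich:
  assumes "Tri l c r \<in> Gamma X"
  shows "\<phi> (Tri l c r) \<in> sandwich (omul (\<phi> r) (\<phi> c)) (omul (\<phi> c) (\<phi> l))"
proof -
  have "Tri l c r \<in> Gam X (height (Tri l c r))"
    using assms mem_Gamma_iff by blast
  moreover have "2 \<le> height (Tri l c r)"
    using assms by (simp add: Tri_in_Gamma_iff)
  moreover have "\<forall>i\<ge>2. \<forall>g \<in> Gam X i.
      \<phi> g \<in> sandwich (omul (\<phi> (gr g)) (\<phi> (gc g))) (omul (\<phi> (gc g)) (\<phi> (gl g)))"
    using skeleton_mapping unfolding skeleton_mapping_def by blast
  ultimately show ?thesis
    by fastforce
qed

definition \<psi> :: "'x gam \<Rightarrow> 'a" where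
  "\<psi> g = the (\<phi> g)"

lemma phi_eq_Some: "g \<in> Gamma X - {One} \<Longrightarrow> \<phi> g = Some (\<psi> g)"
proof (induction g)
  case One
  then show ?case by simp
next
  case (Leaf x)
  then have "\<phi> (Leaf x) \<in> Some ` ES"
    by (simp add: phi_Leaf Leaf_in_Gamma_iff)
  then show ?case by (auto simp: \<psi>_def)
next
  case (Tri l c r)
  then have g: "Tri l c r \<in> Gamma X" by simp
  have "omul (omul (\<phi> c) (\<phi> l)) (\<phi> (Tri l c r)) = \<phi> (Tri l c r)"
    using phi_Tri_sandwich[OF g] unfolding sandwich_def by blast
  moreover have "\<phi> l = Some (\<psi> l)"
    using Tri.IH(1) components_Gamma[OF g] by simp
  ultimately have "\<phi> (Tri l c r) \<noteq> None"
    by (metis omul_eq_None_iff option.distinct(1))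
  then show ?case by (auto simp: \<psi>_def)
qed

lemma psi_idem: "g \<in> Gamma X - {One} \<Longrightarrow> \<psi> g * \<psi> g = \<psi> g"
  using phi_in_E1[of g] phi_eq_Some[of g] by (auto simp: E1_def)

lemma psi_Tri_One:
  assumes "g = Tri l One r" "g \<in> Gamma X"
  shows "\<psi> l * \<psi> g = \<psi> g" and "\<psi> g * \<psi> r = \<psi> g" and "\<psi> r * \<psi> g * \<psi> l = \<psi> r * \<psi> l"
proof -
  obtain x y where "l = Leaf x" "r = Leaf y" "x \<in> X" "y \<in> X"
    using Tri_One_in_GammaE assms by metis
  then have "omul (\<phi> r) (\<phi> One) = \<phi> r" "omul (\<phi> One) (\<phi> l) = \<phi> l"
    using phi_One_Leaf by auto
  moreover have "l \<in> Gamma X - {One}" "r \<in> Gamma X - {One}" "g \<in> Gamma X - {One}"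
    using assms components_Gamma[of g X] by auto
  ultimately have "Some (\<psi> g) \<in> sandwich (Some (\<psi> r)) (Some (\<psi> l))"
    using phi_Tri_sandwich assms by (metis phi_eq_Some)
  then show "\<psi> l * \<psi> g = \<psi> g" "\<psi> g * \<psi> r = \<psi> g" "\<psi> r * \<psi> g * \<psi> l = \<psi> r * \<psi> l"
    by (simp_all add: Some_in_sandwich_iff)
qed

lemma psi_Tri:
  assumes g: "g = Tri l c r" "g \<in> Gamma X" and "c \<noteq> One"
  shows "\<psi> c * \<psi> l * \<psi> g = \<psi> g" and "\<psi> g * \<psi> r * \<psi> c = \<psi> g"
    and "\<psi> c * \<psi> g = \<psi> g" and "\<psi> g * \<psi> c = \<psi> g"
    and "\<psi> r * \<psi> g * \<psi> l = \<psi> r * \<psi> c * \<psi> l"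
proof -
  have mem: "l \<in> Gamma X - {One}" "r \<in> Gamma X - {One}" "g \<in> Gamma X - {One}" "c \<in> Gamma X - {One}"
    using g \<open>c \<noteq> One\<close> components_Gamma[of g X] by (auto simp: Tri_in_Gamma_iff)
  then have "Some (\<psi> g) \<in> sandwich (Some (\<psi> r * \<psi> c)) (Some (\<psi> c * \<psi> l))"
    using phi_Tri_sandwich g by (metis omul.simps(3) phi_eq_Some)
  then have sw: "\<psi> c * \<psi> l * \<psi> g = \<psi> g" "\<psi> g * (\<psi> r * \<psi> c) = \<psi> g"
      "\<psi> r * \<psi> c * \<psi> g * (\<psi> c * \<psi> l) = \<psi> r * \<psi> c * (\<psi> c * \<psi> l)"
    by (simp_all add: Some_in_sandwich_iff)
  have c_idem: "\<psi> c * \<psi> c = \<psi> c"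
    using mem psi_idem by blast
  show "\<psi> c * \<psi> l * \<psi> g = \<psi> g" "\<psi> g * \<psi> r * \<psi> c = \<psi> g"
    using sw by (simp_all add: mult.assoc)
  show cg: "\<psi> c * \<psi> g = \<psi> g"
    using sw(1) by (metis c_idem mult.assoc)
  show gc: "\<psi> g * \<psi> c = \<psi> g"
    using sw(2) by (metis c_idem mult.assoc)
  have "\<psi> r * \<psi> g * \<psi> l = \<psi> r * (\<psi> c * \<psi> g * \<psi> c) * \<psi> l"
    using cg gc by simp
  also have "\<dots> = \<psi> r * \<psi> c * \<psi> g * (\<psi> c * \<psi> l)"
    by (simp add: mult.assoc)
  also have "\<dots> = \<psi> r * (\<psi> c * \<psi> c) * \<psi> l"
    using sw(3) by (simp add: mult.assoc)
  also have "\<dots> = \<psi> r * \<psi> c * \<psi> l"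
    using c_idem by simp
  finally show "\<psi> r * \<psi> g * \<psi> l = \<psi> r * \<psi> c * \<psi> l" .
qed

lemma psi_component_absorb:
  assumes "h \<in> Gamma X" "c \<in> components h"
  shows "\<psi> h * \<psi> c * \<psi> h = \<psi> h"
proof -
  obtain l m r where h: "h = Tri l m r" and c: "c = l \<or> c = r"
    using assms(2) by (cases h) auto
  have h_idem: "\<psi> h * \<psi> h = \<psi> h"
    using assms components_Gamma h psi_idem by blast
  show ?thesis
  proof (cases "m = One")
    case True
    note m = psi_Tri_One[OF h[unfolded True] assms(1)]
    have "\<psi> h * \<psi> l * \<psi> h = \<psi> h"
      using m(1) h_idem by (simp add: mult.assoc)
    moreover have "\<psi> h * \<psi> r * \<psi> h = \<psi> h"
      using m(2) h_idem by simp
    ultimately show ?thesis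
      using c by blast
  next
    case False
    note m = psi_Tri[OF h assms(1) False]
    have "\<psi> h * \<psi> l * \<psi> h = \<psi> h * \<psi> m * \<psi> l * \<psi> h"
      using m(4) by simp
    also have "\<dots> = \<psi> h * (\<psi> m * \<psi> l * \<psi> h)"
      by (simp add: mult.assoc)
    finally have "\<psi> h * \<psi> l * \<psi> h = \<psi> h"
      using m(1) h_idem by simp
    moreover have "\<psi> h * \<psi> r * \<psi> h = \<psi> h * \<psi> r * \<psi> m * \<psi> h"
      using m(3) by (simp add: mult.assoc)
    then have "\<psi> h * \<psi> r * \<psi> h = \<psi> h"
      using m(2) h_idem by simp
    ultimately show ?thesis
      using c by blast
  qed
qed

abbreviation T :: "'a set" where
  "T \<equiv> generated (\<psi> ` (Gamma X - {One}))"

lemma psi_in_T: "g \<in> Gamma X - {One} \<Longrightarrow> \<psi> g \<in> T"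
  by (simp add: generated.gen_base)

inductive chain_product :: "'x gam \<Rightarrow> 'a \<Rightarrow> bool" where
  chain_start: "g \<in> Gamma X - {One} \<Longrightarrow> chain_product g (\<psi> g)"
| chain_step: "chain_product h p \<Longrightarrow> g \<in> components h \<Longrightarrow> chain_product g (p * \<psi> g)"

lemma chain_product_Gamma: "chain_product g p \<Longrightarrow> g \<in> Gamma X - {One}"
  by (induction rule: chain_product.induct) (auto dest: components_Gamma)

lemma chain_product_absorb: "chain_product g p \<Longrightarrow> p * \<psi> g = p"
proof (induction rule: chain_product.induct)
  case (chain_start g)
  then show ?case by (rule psi_idem)
next
  case (chain_step h p g)
  then have "\<psi> g * \<psi> g = \<psi> g"
    using chain_product_Gamma components_Gamma psi_idem by blast
  then show ?case by (simp add: mult.assoc)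
qed

lemma chain_product_regular: "chain_product g p \<Longrightarrow> \<exists>x\<in>T. p * x * p = p"
proof (induction rule: chain_product.induct)
  case (chain_start g)
  then show ?case
    using psi_idem psi_in_T by metis
next
  case (chain_step h p g)
  then obtain x where x: "x \<in> T" "p * x * p = p" by blast
  have h: "h \<in> Gamma X - {One}"
    using chain_step.hyps(1) by (rule chain_product_Gamma)
  have "p * \<psi> g * \<psi> h = p * (\<psi> h * \<psi> g * \<psi> h)"
    using chain_product_absorb[OF chain_step.hyps(1)] by (simp add: mult.assoc[symmetric])
  also have "\<dots> = p"
    using psi_component_absorb chain_step.hyps(2) h chain_product_absorb[OF chain_step.hyps(1)] by simp
  finally have "p * \<psi> g * (\<psi> h * x) * (p * \<psi> g) = p * \<psi> g"
    using x(2) by (metis mult.assoc)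
  moreover have "\<psi> h * x \<in> T"
    using h x(1) psi_in_T generated.gen_mult by blast
  ultimately show ?case by blast
qed

lemma chain_product_lift:
  "chain_product c p \<Longrightarrow> l \<in> Gamma X \<Longrightarrow> c \<in> components l \<Longrightarrow>
    \<exists>q. chain_product l q \<and> L_equiv T (p * \<psi> l) q"
proof (induction arbitrary: l rule: chain_product.induct)
  case (chain_start c)
  have l: "l \<in> Gamma X - {One}"
    using chain_start.prems by auto
  have "L_equiv T (\<psi> c * \<psi> l) (\<psi> l)"
  proof (rule L_equivI)
    show "\<psi> l = \<psi> l * (\<psi> c * \<psi> l)"
      using psi_component_absorb chain_start.prems by (simp add: mult.assoc)
  qed (use chain_start.hyps l psi_in_T in auto)
  then show ?case
    using l chain_product.chain_start by blast
next
  case (chain_step h p c)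
  have p_absorb: "p * \<psi> h = p"
    using chain_step.hyps(1) by (rule chain_product_absorb)
  have h: "h \<in> Gamma X - {One}"
    using chain_step.hyps(1) by (rule chain_product_Gamma)
  show ?case
  proof (cases "l = h")
    case True
    have "p * \<psi> c * \<psi> h = p * (\<psi> h * \<psi> c * \<psi> h)"
      using p_absorb by (simp add: mult.assoc[symmetric])
    also have "\<dots> = p"
      using psi_component_absorb chain_step.hyps(2) h p_absorb by simp
    finally show ?thesis
      using True chain_step.hyps(1) L_equiv_refl by auto
  next
    case False
    define G where "G = Tri l c h"
    have G: "G \<in> Gamma X"
      unfolding G_def using Tri_in_GammaI chain_step h False by blast
    obtain q where q: "chain_product G q" "L_equiv T (p * \<psi> G) q"
      using chain_step.IH[OF G] G_def by auto
    have c: "c \<noteq> One"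
      using chain_step.hyps(2) components_Gamma h by blast
    have "p * \<psi> c * \<psi> l = p * (\<psi> h * \<psi> c * \<psi> l)"
      using p_absorb by (simp add: mult.assoc[symmetric])
    also have "\<dots> = p * (\<psi> h * \<psi> G * \<psi> l)"
      using psi_Tri(5)[OF G_def G c] by simp
    also have "\<dots> = p * \<psi> G * \<psi> l"
      using p_absorb by (simp add: mult.assoc[symmetric])
    finally have "L_equiv T (p * \<psi> c * \<psi> l) (q * \<psi> l)"
      using L_equiv_mult_right[OF q(2)] by simp
    moreover have "chain_product l (q * \<psi> l)"
      using chain_product.chain_step[OF q(1)] G_def by simp
    ultimately show ?thesis by blast
  qed
qed

lemma chain_product_descend: "chain_product g p \<Longrightarrow> \<exists>y. chain_product (Leaf y) p"
proof (induction g arbitrary: p)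
  case One
  then show ?case using chain_product_Gamma by blast
next
  case (Leaf y)
  then show ?case by blast
next
  case (Tri l c r)
  define g where "g = Tri l c r"
  have g: "g \<in> Gamma X" and p_absorb: "p * \<psi> g = p"
    using chain_product_Gamma chain_product_absorb Tri.prems g_def by auto
  have "chain_product r (p * \<psi> r)"
    using chain_product.chain_step[OF Tri.prems(1)] by simp
  show ?case
  proof (cases "c = One")
    case True
    then obtain y where "r = Leaf y"
      using Tri_One_in_GammaE g g_def by blast
    moreover have "p * \<psi> r = p"
      using psi_Tri_One(2)[OF g_def[unfolded True] g] p_absorb by (metis mult.assoc)
    ultimately show ?thesis
      using \<open>chain_product r (p * \<psi> r)\<close> by auto
  next
    case False
    then have "c \<in> components r"
      using Tri_center_components g g_def by blast
    then have "chain_product c (p * \<psi> r * \<psi> c)"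
      by (rule chain_product.chain_step[OF \<open>chain_product r (p * \<psi> r)\<close>])
    moreover have "p * \<psi> r * \<psi> c = p"
      using psi_Tri(2)[OF g_def g False] p_absorb by (metis mult.assoc)
    ultimately show ?thesis
      using Tri.IH(2) by auto
  qed
qed

lemma chain_product_Leaf:
  assumes "chain_product (Leaf y) p" "x \<in> X"
  shows "\<exists>q. chain_product (Leaf x) q \<and> L_equiv T (p * \<psi> (Leaf x)) q"
proof (cases "x = y")
  case True
  then have "p * \<psi> (Leaf x) = p"
    using assms(1) by (simp add: chain_product_absorb)
  then show ?thesis
    using assms(1) True L_equiv_refl by auto
next
  case False
  define G where "G = Tri (Leaf x) One (Leaf y)"
  have "y \<in> X"
    using chain_product_Gamma[OF assms(1)] by (simp add: Leaf_in_Gamma_iff)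
  then have G: "G \<in> Gamma X"
    using assms(2) False by (simp add: G_def Tri_Leaf_in_Gamma)
  obtain q where q: "chain_product G q" "L_equiv T (p * \<psi> G) q"
    using chain_product_lift[OF assms(1) G] G_def by auto
  have p_absorb: "p * \<psi> (Leaf y) = p"
    using assms(1) by (rule chain_product_absorb)
  have "p * \<psi> (Leaf x) = p * (\<psi> (Leaf y) * \<psi> (Leaf x))"
    using p_absorb by (simp add: mult.assoc[symmetric])
  also have "\<dots> = p * (\<psi> (Leaf y) * \<psi> G * \<psi> (Leaf x))"
    using psi_Tri_One(3)[OF G_def G] by simp
  also have "\<dots> = p * \<psi> G * \<psi> (Leaf x)"
    using p_absorb by (simp add: mult.assoc[symmetric])
  finally have "L_equiv T (p * \<psi> (Leaf x)) (q * \<psi> (Leaf x))"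
    using L_equiv_mult_right[OF q(2)] by simp
  moreover have "chain_product (Leaf x) (q * \<psi> (Leaf x))"
    using chain_product.chain_step[OF q(1)] G_def by simp
  ultimately show ?thesis by blast
qed

lemma chain_product_mult_psi:
  "chain_product h p \<Longrightarrow> g \<in> Gamma X - {One} \<Longrightarrow>
    \<exists>q. chain_product g q \<and> L_equiv T (p * \<psi> g) q"
proof (induction g arbitrary: h p)
  case One
  then show ?case by simp
next
  case (Leaf x)
  then obtain y where "chain_product (Leaf y) p"
    using chain_product_descend by blast
  then show ?case
    using chain_product_Leaf Leaf.prems(2) by (simp add: Leaf_in_Gamma_iff)
next
  case (Tri l c r)
  define g where "g = Tri l c r"
  have g: "g \<in> Gamma X"
    using Tri.prems(2) g_def by simp
  have l_comp: "l \<in> components g"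
    by (simp add: g_def)
  have l: "l \<in> Gamma X - {One}"
    using components_Gamma[OF g l_comp] .
  show ?case
  proof (cases "c = One")
    case True
    obtain q1 where q1: "chain_product l q1" "L_equiv T (p * \<psi> l) q1"
      using Tri.IH(1)[OF Tri.prems(1) l] by blast
    obtain q2 where q2: "chain_product g q2" "L_equiv T (q1 * \<psi> g) q2"
      using chain_product_lift[OF q1(1) g l_comp] by blast
    have "p * \<psi> g = p * \<psi> l * \<psi> g"
      using psi_Tri_One(1)[OF g_def[unfolded True] g] by (simp add: mult.assoc)
    also have "L_equiv T \<dots> (q1 * \<psi> g)"
      using q1(2) by (rule L_equiv_mult_right)
    also note q2(2)
    finally show ?thesis
      using q2(1) g_def by blast
  next
    case False
    have c: "c \<in> Gamma X - {One}" and c_comp: "c \<in> components l"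
      using g g_def False Tri_center_components by (auto simp: Tri_in_Gamma_iff)
    obtain q1 where q1: "chain_product c q1" "L_equiv T (p * \<psi> c) q1"
      using Tri.IH(2)[OF Tri.prems(1) c] by blast
    obtain q2 where q2: "chain_product l q2" "L_equiv T (q1 * \<psi> l) q2"
      using chain_product_lift[OF q1(1) _ c_comp] l by blast
    obtain q3 where q3: "chain_product g q3" "L_equiv T (q2 * \<psi> g) q3"
      using chain_product_lift[OF q2(1) g l_comp] by blast
    have "p * \<psi> g = p * \<psi> c * \<psi> l * \<psi> g"
      using psi_Tri(1)[OF g_def g False] by (simp add: mult.assoc)
    also have "L_equiv T \<dots> (q1 * \<psi> l * \<psi> g)"
      using q1(2) by (intro L_equiv_mult_right)
    also have "L_equiv T \<dots> (q2 * \<psi> g)"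
      using q2(2) by (rule L_equiv_mult_right)
    also note q3(2)
    finally show ?thesis
      using q3(1) g_def by blast
  qed
qed

lemma chain_product_mult:
  "b \<in> T \<Longrightarrow> chain_product h p \<Longrightarrow> \<exists>g q. chain_product g q \<and> L_equiv T (p * b) q"
proof (induction arbitrary: h p rule: generated.induct)
  case (gen_base b)
  then show ?case
    using chain_product_mult_psi by blast
next
  case (gen_mult a b)
  obtain g1 q1 where q1: "chain_product g1 q1" "L_equiv T (p * a) q1"
    using gen_mult.IH(1)[OF gen_mult.prems] by blast
  obtain g2 q2 where q2: "chain_product g2 q2" "L_equiv T (q1 * b) q2"
    using gen_mult.IH(2)[OF q1(1)] by blast
  have "p * (a * b) = p * a * b"
    by (simp add: mult.assoc)
  also have "L_equiv T \<dots> (q1 * b)"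
    using q1(2) by (rule L_equiv_mult_right)
  also note q2(2)
  finally show ?case
    using q2(1) by blast
qed

lemma L_equiv_chain_product: "u \<in> T \<Longrightarrow> \<exists>g q. chain_product g q \<and> L_equiv T u q"
proof (induction rule: generated.induct)
  case (gen_base a)
  then show ?case
    using chain_product.chain_start L_equiv_refl by blast
next
  case (gen_mult a b)
  then obtain g q where q: "chain_product g q" "L_equiv T a q"
    by blast
  obtain g' q' where q': "chain_product g' q'" "L_equiv T (q * b) q'"
    using chain_product_mult[OF gen_mult.hyps(2) q(1)] by blast
  have "L_equiv T (a * b) (q * b)"
    using q(2) by (rule L_equiv_mult_right)
  also note q'(2)
  finally show ?case
    using q'(1) by blast
qed

lemma regular_subsemigroup_T: "regular_subsemigroup T"
  unfolding regular_subsemigroup_def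
proof (intro conjI ballI)
  show "a * b \<in> T" if "a \<in> T" "b \<in> T" for a b
    using that by (rule generated.gen_mult)
  show "\<exists>x\<in>T. u * x * u = u" if u: "u \<in> T" for u
  proof -
    obtain g q where "chain_product g q" "L_equiv T u q"
      using L_equiv_chain_product[OF u] by blast
    moreover obtain x where "x \<in> T" "q * x * q = q"
      using chain_product_regular[OF calculation(1)] by blast
    ultimately show ?thesis
      using regular_if_L_equiv by blast
  qed
qed

end

theorem corollary5p2:
  fixes X :: "'x set" and \<phi> :: "'x gam \<Rightarrow> 'a::semigroup_mult option"
  assumes "X \<noteq> {}" and "skeleton_mapping X \<phi>"
  defines "A \<equiv> {a. Some a \<in> \<phi> ` (Gamma X - {One})}"
  shows "\<phi> ` (Gamma X - {One}) \<subseteq> Some ` UNIV \<and> regular_subsemigroup (generated A)"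
proof -
  interpret skeleton X \<phi>
    using assms(2) by unfold_locales
  have "\<phi> ` (Gamma X - {One}) \<subseteq> Some ` UNIV"
    using phi_eq_Some by auto
  moreover have "A = \<psi> ` (Gamma X - {One})"
    unfolding A_def using phi_eq_Some by force
  ultimately show ?thesis
    using regular_subsemigroup_T by simp
qed

end
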